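(* In the abstract boundary problem setting with an invertible reference operator described in the context, the map $\Gamma_0\oplus\bm\Gamma_1:\mathcal D(T^* )\to K'\oplus K$ is surjective.
   Context: Inner products are linear in the first argument and conjugate-linear in the second. Let $H_0$ be a separable Hilbert space with inner product $\langle\cdot,\cdot\rangle$, let $T$ be a closed densely defined symmetric operator in $H_0$ with adjoint $T^*$, and equip $\mathcal D(T^* )$ with the graph norm. Let $H_1\subset H_0$ be a dense subspace which is a Hilbert space in its own right with bounded inclusion $H_1\to H_0$. Let $K^\partial$ be a separable Hilbert space with inner product $\langle\cdot,\cdot\rangle_\partial$ and $K\subset K^\partial$ a dense subspace which is a Hilbert space in its own right with bounded inclusion. Let $K'$ be the space of continuous anti-linear functionals on $K$ (a Hilbert space with the dual norm); $K^\partial$ is regarded as a dense subspace of $K'$ via $y\mapsto(x\mapsto\langle y,x\rangle_\partial)$, so $K\subset K^\partial\subset K'$. For $y\in K'$, $x\in K$ put $\langle y,x\rangle_{K',K}=y(x)$ and $\langle x,y\rangle_{K,K'}=\overline{y(x)}$; these agree with $\langle\cdot,\cdot\rangle_\partial$ when $y\in K^\partial$. Standing assumptions: $H_1\subset\mathcal D(T^* )$ and $H_1$ is dense in $\mathcal D(T^* )$ in the graph norm; $T^*|_{H_1}:H_1\to H_0$ is bounded; $\gamma_0,\gamma_1:H_1\to K$ are bounded linear operators such that $\gamma=\gamma_0\oplus\gamma_1:H_1\to K\oplus K$ is surjective; $\operatorname{Ker}\gamma$ is dense in $H_0$ and $\mathcal D(T)=\operatorname{Ker}\gamma$; and the Lagrange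 identity $\langle T^*u,v\rangle-\langle u,T^*v\rangle=\langle\gamma_1u,\gamma_0v\rangle_\partial-\langle\gamma_0u,\gamma_1v\rangle_\partial$ holds for all $u,v\in H_1$. $\Gamma_0,\Gamma_1:\mathcal D(T^* )\to K'$ denote the (existing, unique) continuous extensions of $\gamma_0,\gamma_1$; they satisfy $\langle T^*u,v\rangle-\langle u,T^*v\rangle=\langle\Gamma_1u,\Gamma_0v\rangle_{K',K}-\langle\Gamma_0u,\Gamma_1v\rangle_{K',K}$ for $u\in\mathcal D(T^* )$, $v\in H_1$. Moreover $A$ is a self-adjoint operator in $H_0$ with $T\subset A\subset T^*$, $\mathcal D(A)=\operatorname{Ker}\gamma_0$ (so $\mathcal D(A)\subset H_1$), and $A$ has a bounded everywhere defined inverse. Then $\mathcal D(T^* )=\mathcal D(A)\dotplus\operatorname{Ker}T^*$ topologically, with projections $p=A^{-1}T^*$ onto $\mathcal D(A)$ and $k=1-p$ onto $\operatorname{Ker}T^*$, and $\Gamma_0$ restricts to a topological isomorphism $\operatorname{Ker}T^*\to K'$; let $\bm\gamma(0):K'\to\operatorname{Ker}T^*$ be its inverse, $M(0)=\Gamma_1\circ\bm\gamma(0):K'\to K'$, and define the reduced boundary operator $\bm\Gamma_1=\Gamma_1-M(0)\circ\Gamma_0:\mathcal D(T^* )\to K'$; its image lies in $K$. *)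

theory Defs
  imports "HOL-Analysis.Analysis"
begin

class cvec = ab_group_add +
  fixes cscale :: "complex \<Rightarrow> 'a \<Rightarrow> 'a"
  assumes cscale_add_right: "cscale a (x + y) = cscale a x + cscale a y"
    and cscale_add_left: "cscale (a + b) x = cscale a x + cscale b x"
    and cscale_cscale: "cscale a (cscale b x) = cscale (a * b) x"
    and cscale_one: "cscale 1 x = x"

definition csubspace_on :: "'a::cvec set \<Rightarrow> bool" where
  "csubspace_on V \<longleftrightarrow> 0 \<in> V \<and> (\<forall>x\<in>V. \<forall>y\<in>V. x + y \<in> V) \<and> (\<forall>a. \<forall>x\<in>V. cscale a x \<in> V)"

definition clinear_on :: "'a::cvec set \<Rightarrow> ('a \<Rightarrow> 'b::cvec) \<Rightarrow> bool" where
  "clinear_on V f \<longleftrightarrow> (\<forall>x\<in>V. \<forall>y\<in>V. f (x + y) = f x + f y) \<and> (\<forall>a. \<forall>x\<in>V. f (cscale a x) = cscale a (f x))"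

definition inner_product_on :: "'a::cvec set \<Rightarrow> ('a \<Rightarrow> 'a \<Rightarrow> complex) \<Rightarrow> bool" where
  "inner_product_on V ip \<longleftrightarrow> csubspace_on V \<and>
     (\<forall>x\<in>V. \<forall>y\<in>V. \<forall>z\<in>V. ip (x + y) z = ip x z + ip y z) \<and>
     (\<forall>a. \<forall>x\<in>V. \<forall>y\<in>V. ip (cscale a x) y = a * ip x y) \<and>
     (\<forall>x\<in>V. \<forall>y\<in>V. ip y x = cnj (ip x y)) \<and>
     (\<forall>x\<in>V. 0 \<le> Re (ip x x)) \<and>
     (\<forall>x\<in>V. ip x x = 0 \<longrightarrow> x = 0)"

definition ipnorm :: "('a \<Rightarrow> 'a \<Rightarrow> complex) \<Rightarrow> 'a \<Rightarrow> real" where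
  "ipnorm ip x = sqrt (Re (ip x x))"

definition complete_on :: "'a::cvec set \<Rightarrow> ('a \<Rightarrow> real) \<Rightarrow> bool" where
  "complete_on V nrm \<longleftrightarrow> (\<forall>s. (\<forall>n. s n \<in> V) \<longrightarrow>
      (\<forall>e>0. \<exists>N. \<forall>m\<ge>N. \<forall>n\<ge>N. nrm (s m - s n) < e) \<longrightarrow>
      (\<exists>l\<in>V. (\<lambda>n. nrm (s n - l)) \<longlonglongrightarrow> 0))"

definition dense_wrt :: "('a::cvec \<Rightarrow> real) \<Rightarrow> 'a set \<Rightarrow> 'a set \<Rightarrow> bool" where
  "dense_wrt nrm S V \<longleftrightarrow> (\<forall>x\<in>V. \<forall>e>0. \<exists>s\<in>S. nrm (x - s) < e)"

definition separable_on :: "'a::cvec set \<Rightarrow> ('a \<Rightarrow> real) \<Rightarrow> bool" where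
  "separable_on V nrm \<longleftrightarrow> (\<exists>D. D \<subseteq> V \<and> countable D \<and> dense_wrt nrm D V)"

definition hilbert_on :: "'a::cvec set \<Rightarrow> ('a \<Rightarrow> 'a \<Rightarrow> complex) \<Rightarrow> bool" where
  "hilbert_on V ip \<longleftrightarrow> inner_product_on V ip \<and> complete_on V (ipnorm ip)"

definition adj_dom :: "('a \<Rightarrow> 'a \<Rightarrow> complex) \<Rightarrow> 'a set \<Rightarrow> ('a \<Rightarrow> 'a) \<Rightarrow> 'a set" where
  "adj_dom ip D T = {v. \<exists>w. \<forall>u\<in>D. ip (T u) v = ip u w}"

definition adj_op :: "('a \<Rightarrow> 'a \<Rightarrow> complex) \<Rightarrow> 'a set \<Rightarrow> ('a \<Rightarrow> 'a) \<Rightarrow> 'a \<Rightarrow> 'a" where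
  "adj_op ip D T v = (THE w. \<forall>u\<in>D. ip (T u) v = ip u w)"

definition closed_op :: "('a::cvec \<Rightarrow> real) \<Rightarrow> 'a set \<Rightarrow> ('a \<Rightarrow> 'a) \<Rightarrow> bool" where
  "closed_op nrm D T \<longleftrightarrow> (\<forall>s u w. (\<forall>n. s n \<in> D) \<longrightarrow> (\<lambda>n. nrm (s n - u)) \<longlonglongrightarrow> 0 \<longrightarrow>
      (\<lambda>n. nrm (T (s n) - w)) \<longlonglongrightarrow> 0 \<longrightarrow> u \<in> D \<and> T u = w)"

definition symmetric_op :: "('a \<Rightarrow> 'a \<Rightarrow> complex) \<Rightarrow> 'a set \<Rightarrow> ('a \<Rightarrow> 'a) \<Rightarrow> bool" where
  "symmetric_op ip D T \<longleftrightarrow> (\<forall>u\<in>D. \<forall>v\<in>D. ip (T u) v = ip u (T v))"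

definition selfadjoint_op :: "('a::cvec \<Rightarrow> 'a \<Rightarrow> complex) \<Rightarrow> 'a set \<Rightarrow> ('a \<Rightarrow> 'a) \<Rightarrow> bool" where
  "selfadjoint_op ip D A \<longleftrightarrow> csubspace_on D \<and> clinear_on D A \<and> dense_wrt (ipnorm ip) D UNIV \<and>
     adj_dom ip D A = D \<and> (\<forall>v\<in>D. adj_op ip D A v = A v)"

definition graph_norm :: "('a \<Rightarrow> 'a \<Rightarrow> complex) \<Rightarrow> ('a \<Rightarrow> 'a) \<Rightarrow> 'a \<Rightarrow> real" where
  "graph_norm ip T u = sqrt ((ipnorm ip u)\<^sup>2 + (ipnorm ip (T u))\<^sup>2)"

section \<open>The antidual K' of K, realised as functions 'k => complex vanishing off K\<close>

definition antidual :: "'k::cvec set \<Rightarrow> ('k \<Rightarrow> real) \<Rightarrow> ('k \<Rightarrow> complex) set" where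
  "antidual K nK = {f. (\<forall>x\<in>K. \<forall>y\<in>K. f (x + y) = f x + f y) \<and>
      (\<forall>a. \<forall>x\<in>K. f (cscale a x) = cnj a * f x) \<and>
      (\<exists>C. \<forall>x\<in>K. cmod (f x) \<le> C * nK x) \<and>
      (\<forall>x. x \<notin> K \<longrightarrow> f x = 0)}"

definition emb_dual :: "'k set \<Rightarrow> ('k \<Rightarrow> 'k \<Rightarrow> complex) \<Rightarrow> 'k \<Rightarrow> ('k \<Rightarrow> complex)" where
  "emb_dual K ipd y = (\<lambda>x. if x \<in> K then ipd y x else 0)"

definition gamma_zero :: "'a::cvec set \<Rightarrow> ('a \<Rightarrow> 'a) \<Rightarrow> ('a \<Rightarrow> 'k \<Rightarrow> complex) \<Rightarrow> ('k \<Rightarrow> complex) \<Rightarrow> 'a" where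
  "gamma_zero Ds Ts G0 = inv_into {u\<in>Ds. Ts u = 0} G0"

definition weyl_zero :: "'a::cvec set \<Rightarrow> ('a \<Rightarrow> 'a) \<Rightarrow> ('a \<Rightarrow> 'k \<Rightarrow> complex) \<Rightarrow> ('a \<Rightarrow> 'k \<Rightarrow> complex) \<Rightarrow> ('k \<Rightarrow> complex) \<Rightarrow> ('k \<Rightarrow> complex)" where
  "weyl_zero Ds Ts G0 G1 phi = G1 (gamma_zero Ds Ts G0 phi)"

definition reduced_Gamma1 :: "'a::cvec set \<Rightarrow> ('a \<Rightarrow> 'a) \<Rightarrow> ('a \<Rightarrow> 'k \<Rightarrow> complex) \<Rightarrow> ('a \<Rightarrow> 'k \<Rightarrow> complex) \<Rightarrow> 'a \<Rightarrow> ('k \<Rightarrow> complex)" where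
  "reduced_Gamma1 Ds Ts G0 G1 u = (\<lambda>x. G1 u x - weyl_zero Ds Ts G0 G1 (G0 u) x)"

end

theory Submission
  imports Defs
begin

(*
  Given \<phi> \<in> K' and x \<in> K, the element \<gamma>(0)\<phi> + v with v \<in> Ker \<gamma>\<^sub>0, \<gamma>\<^sub>1 v = x is mapped to (\<phi>, x),
  because the reduced operator \<Gamma>\<^sub>1 - M(0)\<Gamma>\<^sub>0 vanishes on Ker T\<^sup>*. The substance is that \<Gamma>\<^sub>0 maps
  Ker T\<^sup>* onto all of K'. The map \<gamma>\<^sub>1 A\<^sup>-\<^sup>1 : H\<^sub>0 \<rightarrow> K has closed graph: by the Lagrange identity,
  \<langle>\<gamma>\<^sub>0 w, \<gamma>\<^sub>1 A\<^sup>-\<^sup>1 f\<rangle>\<^sub>\<partial> = \<langle>w, f\<rangle> - \<langle>T\<^sup>* w, A\<^sup>-\<^sup>1 f\<rangle> is continuous in f, and K is dense in K\<^sup>\<partial>. By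
  the closed graph theorem it is bounded, so f \<mapsto> \<phi>(\<gamma>\<^sub>1 A\<^sup>-\<^sup>1 f) has a Riesz representative u.
  Since \<gamma>\<^sub>1 vanishes on D(T) and A extends T, u is orthogonal to the range of T, i.e. u \<in> Ker T\<^sup>*.
  The Lagrange identity, extended from H\<^sub>1 to the domain of T\<^sup>* by graph-norm density, then
  gives \<Gamma>\<^sub>0 u = \<phi>.
*)

lemma cscale_zero_right [simp]: "cscale a (0::'a::cvec) = 0"
proof -
  have "cscale a 0 + cscale a 0 = cscale a (0::'a) + 0" by (simp flip: cscale_add_right)
  then show ?thesis by (rule add_left_imp_eq)
qed

lemma cscale_zero_left [simp]: "cscale 0 (x::'a::cvec) = 0"
proof -
  have "cscale 0 x + cscale 0 x = cscale 0 x + 0" by (simp flip: cscale_add_left)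
  then show ?thesis by (rule add_left_imp_eq)
qed

lemma cscale_minus_left: "cscale (- a) (x::'a::cvec) = - cscale a x"
proof -
  have "cscale (- a) x + cscale a x = 0" by (simp flip: cscale_add_left)
  then show ?thesis by (simp add: eq_neg_iff_add_eq_0)
qed

lemma cscale_minus_one [simp]: "cscale (-1) (x::'a::cvec) = - x"
  by (simp only: cscale_minus_left cscale_one)

lemma cscale_minus_right: "cscale a (- (x::'a::cvec)) = - cscale a x"
proof -
  have "cscale a (- x) + cscale a x = 0" by (simp flip: cscale_add_right)
  then show ?thesis by (simp add: eq_neg_iff_add_eq_0)
qed

lemma cscale_diff_right: "cscale a ((x::'a::cvec) - y) = cscale a x - cscale a y"
  by (simp only: diff_conv_add_uminus cscale_add_right cscale_minus_right)

lemma cscale_two: "cscale 2 (x::'a::cvec) = x + x"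
  using cscale_add_left[of 1 1 x] by (simp add: cscale_one)

lemma csubspace_zero: "csubspace_on V \<Longrightarrow> 0 \<in> V"
  by (simp add: csubspace_on_def)

lemma csubspace_add: "csubspace_on V \<Longrightarrow> x \<in> V \<Longrightarrow> y \<in> V \<Longrightarrow> x + y \<in> V"
  by (simp add: csubspace_on_def)

lemma csubspace_scale: "csubspace_on V \<Longrightarrow> x \<in> V \<Longrightarrow> cscale a x \<in> V"
  by (simp add: csubspace_on_def)

lemma csubspace_uminus: "csubspace_on V \<Longrightarrow> x \<in> V \<Longrightarrow> - x \<in> V"
  using csubspace_scale[of V x "-1"] by simp

lemma csubspace_diff: "csubspace_on V \<Longrightarrow> x \<in> V \<Longrightarrow> y \<in> V \<Longrightarrow> x - y \<in> V"
  using csubspace_add[of V x "-y"] csubspace_uminus[of V y] by simp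

lemma clinear_on_add: "clinear_on V f \<Longrightarrow> x \<in> V \<Longrightarrow> y \<in> V \<Longrightarrow> f (x + y) = f x + f y"
  by (simp add: clinear_on_def)

lemma clinear_on_scale: "clinear_on V f \<Longrightarrow> x \<in> V \<Longrightarrow> f (cscale a x) = cscale a (f x)"
  by (simp add: clinear_on_def)

lemma clinear_on_diff:
  assumes "csubspace_on V" "clinear_on V f" "x \<in> V" "y \<in> V"
  shows "f (x - y) = f x - f y"
  using assms clinear_on_add[of V f x "-y"] clinear_on_scale[of V f y "-1"] csubspace_uminus[of V y]
  by simp

lemma inv_into_clinear:
  assumes V: "csubspace_on V" and f: "clinear_on V f" and bij: "bij_betw f V UNIV"
  shows "clinear_on UNIV (inv_into V f)"
proof -
  have inv_in: "inv_into V f y \<in> V" and f_inv: "f (inv_into V f y) = y" for y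
    using bij by (auto simp: bij_betw_def inv_into_into f_inv_into_f)
  have inj: "x = y" if "x \<in> V" "y \<in> V" "f x = f y" for x y
    using bij that by (auto simp: bij_betw_def dest: inj_onD)
  show ?thesis
    unfolding clinear_on_def
    by (auto intro!: inj simp: inv_in f_inv csubspace_add[OF V] csubspace_scale[OF V]
             clinear_on_add[OF f] clinear_on_scale[OF f])
qed

lemma functional_zero_by_density:
  fixes f :: "'a::cvec \<Rightarrow> complex" and nrm :: "'a \<Rightarrow> real"
  assumes S: "csubspace_on S" and D: "D \<subseteq> S" "dense_wrt nrm D S"
    and f_diff: "\<forall>u\<in>S. \<forall>v\<in>S. f (u - v) = f u - f v" and f_D: "\<forall>v\<in>D. f v = 0"
    and f_bound: "\<forall>u\<in>S. cmod (f u) \<le> C * nrm u" and nrm_nonneg: "\<forall>u\<in>S. 0 \<le> nrm u"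
    and u: "u \<in> S"
  shows "f u = 0"
proof -
  define C' where "C' = max C 0 + 1"
  have C': "C' > 0" unfolding C'_def by simp
  have "cmod (f u) \<le> e" if e: "e > 0" for e
  proof -
    obtain v where v: "v \<in> D" "nrm (u - v) < e / C'"
      using D(2) u e C' unfolding dense_wrt_def by (meson divide_pos_pos)
    have uv: "u - v \<in> S" using csubspace_diff[OF S u] v(1) D(1) by blast
    have "cmod (f u) = cmod (f (u - v))" using f_diff f_D u v(1) D(1) by auto
    also have "\<dots> \<le> C' * nrm (u - v)"
      using f_bound nrm_nonneg uv unfolding C'_def
      by (meson max.cobounded1 less_add_one order_trans mult_right_mono less_imp_le)
    also have "\<dots> \<le> e" using v(2) C' by (simp add: field_simps)
    finally show ?thesis .
  qed
  then show ?thesis by (metis field_le_epsilon add_0 norm_le_zero_iff)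
qed

section \<open>Inner product spaces\<close>

locale ipspace =
  fixes V :: "'a::cvec set" and ip :: "'a \<Rightarrow> 'a \<Rightarrow> complex"
  assumes inner_product: "inner_product_on V ip"
begin

lemma subspace: "csubspace_on V"
  using inner_product unfolding inner_product_on_def by (elim conjE) fast

lemma ip_add_left: "x \<in> V \<Longrightarrow> y \<in> V \<Longrightarrow> z \<in> V \<Longrightarrow> ip (x + y) z = ip x z + ip y z"
  using inner_product unfolding inner_product_on_def by (elim conjE) fast

lemma ip_scale_left: "x \<in> V \<Longrightarrow> y \<in> V \<Longrightarrow> ip (cscale a x) y = a * ip x y"
  using inner_product unfolding inner_product_on_def by (elim conjE) fast

lemma ip_conj_sym: "x \<in> V \<Longrightarrow> y \<in> V \<Longrightarrow> ip y x = cnj (ip x y)"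
  using inner_product unfolding inner_product_on_def by (elim conjE) fast

lemma ip_self_nonneg: "x \<in> V \<Longrightarrow> 0 \<le> Re (ip x x)"
  using inner_product unfolding inner_product_on_def by (elim conjE) fast

lemma ip_self_eq_zero: "x \<in> V \<Longrightarrow> ip x x = 0 \<Longrightarrow> x = 0"
  using inner_product unfolding inner_product_on_def by (elim conjE) fast

lemma ip_add_right:
  assumes "x \<in> V" "y \<in> V" "z \<in> V"
  shows "ip x (y + z) = ip x y + ip x z"
  using assms ip_conj_sym[of "y + z" x] ip_conj_sym[of y x] ip_conj_sym[of z x]
  by (simp add: ip_add_left csubspace_add[OF subspace])

lemma ip_scale_right:
  assumes "x \<in> V" "y \<in> V"
  shows "ip x (cscale a y) = cnj a * ip x y"
  using assms ip_conj_sym[of "cscale a y" x] ip_conj_sym[of y x]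
  by (simp add: ip_scale_left csubspace_scale[OF subspace])

lemma ip_zero_left [simp]: "y \<in> V \<Longrightarrow> ip 0 y = 0"
  using ip_scale_left[of 0 y 0] csubspace_zero[OF subspace] by simp

lemma ip_zero_right [simp]: "y \<in> V \<Longrightarrow> ip y 0 = 0"
  using ip_scale_right[of y 0 0] csubspace_zero[OF subspace] by simp

lemma ip_diff_left: "x \<in> V \<Longrightarrow> y \<in> V \<Longrightarrow> z \<in> V \<Longrightarrow> ip (x - y) z = ip x z - ip y z"
  using ip_add_left[of x "-y" z] ip_scale_left[of y z "-1"] csubspace_uminus[OF subspace, of y]
  by simp

lemma ip_diff_right: "x \<in> V \<Longrightarrow> y \<in> V \<Longrightarrow> z \<in> V \<Longrightarrow> ip x (y - z) = ip x y - ip x z"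
  using ip_add_right[of x y "-z"] ip_scale_right[of x z "-1"] csubspace_uminus[OF subspace, of z]
  by simp

lemma ipnorm_nonneg: "x \<in> V \<Longrightarrow> 0 \<le> ipnorm ip x"
  using ip_self_nonneg by (simp add: ipnorm_def)

lemma ipnorm_sq: "x \<in> V \<Longrightarrow> (ipnorm ip x)\<^sup>2 = Re (ip x x)"
  using ip_self_nonneg by (simp add: ipnorm_def)

lemma ip_self_eq_ipnorm_sq:
  assumes x: "x \<in> V"
  shows "ip x x = complex_of_real ((ipnorm ip x)\<^sup>2)"
proof -
  have "Im (ip x x) = 0"
    using arg_cong[OF ip_conj_sym[OF x x], of Im] by simp
  then show ?thesis
    by (simp add: ipnorm_sq[OF x] complex_eq_iff)
qed

lemma ipnorm_zero [simp]: "ipnorm ip 0 = 0"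
  using csubspace_zero[OF subspace] by (simp add: ipnorm_def)

lemma ipnorm_eq_zero_iff: "x \<in> V \<Longrightarrow> ipnorm ip x = 0 \<longleftrightarrow> x = 0"
  using ip_self_eq_ipnorm_sq ip_self_eq_zero by fastforce

lemma cauchy_schwarz:
  assumes x: "x \<in> V" and y: "y \<in> V"
  shows "cmod (ip x y) \<le> ipnorm ip x * ipnorm ip y"
proof (cases "y = 0")
  case True
  then show ?thesis using x by simp
next
  case False
  define r where "r = (ipnorm ip y)\<^sup>2"
  have r: "r > 0"
    using False y ipnorm_eq_zero_iff[OF y] ipnorm_nonneg[OF y] unfolding r_def by simp
  define p where "p = ip x y"
  define t where "t = p / of_real r"
  have ty: "cscale t y \<in> V" using csubspace_scale[OF subspace y] .
  have "ip (x - cscale t y) (x - cscale t y) = ip x x - cnj t * p - t * cnj p + t * cnj t * of_real r"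
    using x y ty ip_self_eq_ipnorm_sq[OF y]
    by (simp add: ip_diff_left ip_diff_right ip_scale_left ip_scale_right ip_conj_sym[OF x y]
        csubspace_diff[OF subspace] p_def r_def algebra_simps)
  also have "\<dots> = ip x x - of_real ((cmod p)\<^sup>2 / r)"
  proof -
    have "r \<noteq> 0" using r by simp
    then have "cnj t * p = p * cnj p / of_real r" "t * cnj p = p * cnj p / of_real r"
      "t * cnj t * of_real r = p * cnj p / of_real r"
      unfolding t_def by (simp_all add: field_simps)
    then show ?thesis by (simp add: complex_norm_square[symmetric])
  qed
  finally have "0 \<le> Re (ip x x) - (cmod p)\<^sup>2 / r"
    using ip_self_nonneg[OF csubspace_diff[OF subspace x ty]] by simp
  then have "(cmod p)\<^sup>2 \<le> (ipnorm ip x * ipnorm ip y)\<^sup>2"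
    using r ipnorm_sq[OF x] unfolding r_def by (simp add: field_simps power_mult_distrib)
  then show ?thesis
    unfolding p_def by (meson mult_nonneg_nonneg ipnorm_nonneg[OF x] ipnorm_nonneg[OF y] power2_le_imp_le)
qed

lemma ipnorm_add_sq:
  assumes x: "x \<in> V" and y: "y \<in> V"
  shows "(ipnorm ip (x + y))\<^sup>2 = (ipnorm ip x)\<^sup>2 + (ipnorm ip y)\<^sup>2 + 2 * Re (ip x y)"
  using x y csubspace_add[OF subspace x y]
  by (simp add: ipnorm_sq ip_add_left ip_add_right ip_conj_sym[OF x y])

lemma ipnorm_diff_sq:
  assumes x: "x \<in> V" and y: "y \<in> V"
  shows "(ipnorm ip (x - y))\<^sup>2 = (ipnorm ip x)\<^sup>2 + (ipnorm ip y)\<^sup>2 - 2 * Re (ip x y)"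
  using x y csubspace_diff[OF subspace x y]
  by (simp add: ipnorm_sq ip_diff_left ip_diff_right ip_conj_sym[OF x y])

lemma ipnorm_triangle:
  assumes x: "x \<in> V" and y: "y \<in> V"
  shows "ipnorm ip (x + y) \<le> ipnorm ip x + ipnorm ip y"
proof -
  have "Re (ip x y) \<le> ipnorm ip x * ipnorm ip y"
    using complex_Re_le_cmod cauchy_schwarz[OF x y] by (rule order_trans)
  then have "(ipnorm ip (x + y))\<^sup>2 \<le> (ipnorm ip x + ipnorm ip y)\<^sup>2"
    using ipnorm_add_sq[OF x y] by (simp add: power2_eq_square algebra_simps)
  then show ?thesis
    using ipnorm_nonneg x y by (meson add_nonneg_nonneg power2_le_imp_le)
qed

lemma ipnorm_scale:
  assumes x: "x \<in> V"
  shows "ipnorm ip (cscale a x) = cmod a * ipnorm ip x"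
proof -
  have ax: "cscale a x \<in> V" using csubspace_scale[OF subspace x] .
  have "ip (cscale a x) (cscale a x) = of_real ((cmod a)\<^sup>2) * ip x x"
    using x ax by (simp add: ip_scale_left ip_scale_right mult.assoc mult.commute[of "cnj a"] flip: complex_norm_square)
  then have "(ipnorm ip (cscale a x))\<^sup>2 = (cmod a * ipnorm ip x)\<^sup>2"
    using ipnorm_sq[OF ax] ip_self_eq_ipnorm_sq[OF x] by (simp add: power_mult_distrib)
  then show ?thesis
    using ipnorm_nonneg[OF ax] ipnorm_nonneg[OF x] by (simp add: power2_eq_iff_nonneg)
qed

lemma ipnorm_minus: "x \<in> V \<Longrightarrow> ipnorm ip (- x) = ipnorm ip x"
  using ipnorm_scale[of x "-1"] by simp

lemma ipnorm_diff_le: "x \<in> V \<Longrightarrow> y \<in> V \<Longrightarrow> ipnorm ip (x - y) \<le> ipnorm ip x + ipnorm ip y"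
  using ipnorm_triangle[of x "- y"] ipnorm_minus[of y] csubspace_uminus[OF subspace, of y] by simp

lemma ipnorm_commute: "x \<in> V \<Longrightarrow> y \<in> V \<Longrightarrow> ipnorm ip (x - y) = ipnorm ip (y - x)"
  using ipnorm_minus[OF csubspace_diff[OF subspace, of y x]] by simp

lemma ipnorm_triangle_diff:
  "x \<in> V \<Longrightarrow> y \<in> V \<Longrightarrow> z \<in> V \<Longrightarrow> ipnorm ip (x - z) \<le> ipnorm ip (x - y) + ipnorm ip (y - z)"
  using ipnorm_triangle[OF csubspace_diff[OF subspace, of x y] csubspace_diff[OF subspace, of y z]]
  by simp

lemma parallelogram:
  "x \<in> V \<Longrightarrow> y \<in> V \<Longrightarrow>
    (ipnorm ip (x + y))\<^sup>2 + (ipnorm ip (x - y))\<^sup>2 = 2 * (ipnorm ip x)\<^sup>2 + 2 * (ipnorm ip y)\<^sup>2"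
  using ipnorm_add_sq ipnorm_diff_sq by simp

lemma orthogonal_to_dense_eq_zero:
  assumes D: "D \<subseteq> V" "dense_wrt (ipnorm ip) D V" and w: "w \<in> V" and orth: "\<forall>u\<in>D. ip u w = 0"
  shows "w = 0"
proof -
  have "ip w w = 0"
  proof (rule functional_zero_by_density[OF subspace D, where f = "\<lambda>u. ip u w"])
    show "\<forall>u\<in>V. cmod (ip u w) \<le> ipnorm ip w * ipnorm ip u"
      using cauchy_schwarz w by (simp add: mult.commute)
  qed (use orth w ip_diff_left ipnorm_nonneg in auto)
  then show ?thesis using ip_self_eq_zero w by blast
qed

lemma minimal_norm_orthogonal:
  assumes e: "e \<in> V" and n: "n \<in> V" and minimal: "\<And>t. ipnorm ip e \<le> ipnorm ip (e - cscale t n)"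
  shows "ip e n = 0"
proof (cases "n = 0")
  case False
  define r where "r = (ipnorm ip n)\<^sup>2"
  have r: "r > 0"
    using False ipnorm_eq_zero_iff[OF n] ipnorm_nonneg[OF n] unfolding r_def by simp
  define q where "q = ip e n"
  define t where "t = q / of_real r"
  have tn: "cscale t n \<in> V" using csubspace_scale[OF subspace n] .
  have "ip e (cscale t n) = of_real ((cmod q)\<^sup>2 / r)"
    using e n by (simp add: ip_scale_right t_def q_def mult.commute flip: complex_norm_square)
  moreover have "(ipnorm ip (cscale t n))\<^sup>2 = (cmod q)\<^sup>2 / r"
  proof -
    have "cmod t = cmod q / r" using r by (simp add: t_def norm_divide)
    then have "(ipnorm ip (cscale t n))\<^sup>2 = (cmod q / r)\<^sup>2 * r"
      using n by (simp add: ipnorm_scale power_mult_distrib power_divide flip: r_def)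
    then show ?thesis using r by (simp add: power2_eq_square)
  qed
  ultimately have "(ipnorm ip (e - cscale t n))\<^sup>2 = (ipnorm ip e)\<^sup>2 - (cmod q)\<^sup>2 / r"
    using ipnorm_diff_sq[OF e tn] by simp
  moreover have "(ipnorm ip e)\<^sup>2 \<le> (ipnorm ip (e - cscale t n))\<^sup>2"
    using minimal[of t] ipnorm_nonneg[OF e] by (simp add: power_mono)
  ultimately have "(cmod q)\<^sup>2 / r \<le> 0" by simp
  then show ?thesis using r unfolding q_def by (simp add: divide_le_0_iff)
qed (use e in simp)

lemma geometric_increments_bound:
  assumes y: "\<And>m. y m \<in> V" and step: "\<And>m. ipnorm ip (y m - y (Suc m)) \<le> c * (1/2) ^ m"
  shows "ipnorm ip (y m - y (m + j)) \<le> 2 * c * (1/2) ^ m"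
proof -
  have c: "0 \<le> c" using step[of 0] ipnorm_nonneg[OF csubspace_diff[OF subspace y y], of 0 1] by simp
  have "ipnorm ip (y m - y (m + j)) \<le> 2 * c * ((1/2) ^ m - (1/2) ^ (m + j))"
  proof (induction j)
    case (Suc j)
    have "ipnorm ip (y m - y (m + Suc j)) \<le> ipnorm ip (y m - y (m + j)) + ipnorm ip (y (m + j) - y (Suc (m + j)))"
      using ipnorm_triangle_diff[OF y y y] by simp
    also have "\<dots> \<le> 2 * c * ((1/2) ^ m - (1/2) ^ (m + j)) + c * (1/2) ^ (m + j)"
      using Suc.IH step by (rule add_mono)
    finally show ?case by (simp add: algebra_simps)
  qed simp
  also have "\<dots> \<le> 2 * c * (1/2) ^ m" using c by (simp add: mult_left_mono)
  finally show ?thesis .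
qed

lemma geometric_increments_Cauchy:
  assumes y: "\<And>m. y m \<in> V" and step: "\<And>m. ipnorm ip (y m - y (Suc m)) \<le> c * (1/2) ^ m"
  shows "\<forall>e>0. \<exists>N. \<forall>m\<ge>N. \<forall>k\<ge>N. ipnorm ip (y m - y k) < e"
proof (intro allI impI)
  fix e :: real assume e: "e > 0"
  have "(\<lambda>m. 2 * c * (1/2) ^ m) \<longlonglongrightarrow> 0"
    by (intro tendsto_mult_right_zero LIMSEQ_realpow_zero) auto
  then obtain N where N: "\<And>m. m \<ge> N \<Longrightarrow> 2 * c * (1/2) ^ m < e"
    using e unfolding LIMSEQ_iff by (metis abs_less_iff diff_zero real_norm_def)
  have "ipnorm ip (y m - y k) < e" if "m \<ge> N" "k \<ge> N" "m \<le> k" for m k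
    using that geometric_increments_bound[OF y step, of m "k - m"] N[of m] by simp
  then show "\<exists>N. \<forall>m\<ge>N. \<forall>k\<ge>N. ipnorm ip (y m - y k) < e"
    by (metis ipnorm_commute[OF y y] nat_le_linear)
qed

end

lemma LIMSEQ_by_bound:
  fixes X :: "nat \<Rightarrow> 'a::real_normed_vector"
  assumes "\<And>n. norm (X n - L) \<le> C * r n" and "r \<longlonglongrightarrow> 0"
  shows "X \<longlonglongrightarrow> L"
proof (rule LIM_zero_cancel, rule Lim_null_comparison)
  show "\<forall>\<^sub>F n in sequentially. norm (X n - L) \<le> C * r n" using assms(1) by simp
  show "(\<lambda>n. C * r n) \<longlonglongrightarrow> 0" using tendsto_mult_right_zero[OF assms(2)] .
qed

section \<open>Riesz representation and the closed graph theorem\<close>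

locale hspace = ipspace "UNIV::'a::cvec set" ip for ip +
  assumes complete: "complete_on UNIV (ipnorm ip)"
begin

lemma midpoint_distance_bound:
  assumes "d \<le> ipnorm ip (f - cscale (1/2) (x + y))" "0 \<le> d"
  shows "(ipnorm ip (x - y))\<^sup>2 \<le> 2 * (ipnorm ip (f - x))\<^sup>2 + 2 * (ipnorm ip (f - y))\<^sup>2 - 4 * d\<^sup>2"
proof -
  have "(f - x) + (f - y) = cscale 2 (f - cscale (1/2) (x + y))"
    by (simp add: cscale_diff_right cscale_cscale cscale_two cscale_one)
  then have "ipnorm ip ((f - x) + (f - y)) = 2 * ipnorm ip (f - cscale (1/2) (x + y))"
    by (simp add: ipnorm_scale)
  then have "4 * d\<^sup>2 \<le> (ipnorm ip ((f - x) + (f - y)))\<^sup>2"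
    using assms by (simp add: power_mono power_mult_distrib)
  moreover have "ipnorm ip (x - y) = ipnorm ip ((f - x) - (f - y))"
    by (simp add: ipnorm_commute)
  ultimately show ?thesis using parallelogram[of "f - x" "f - y"] by simp
qed

lemma minimizing_sequence_Cauchy:
  assumes d: "0 \<le> d" and ms: "\<And>n. ipnorm ip (f - ms n) < d + inverse (real (Suc n))"
    and lower: "\<And>j k. d \<le> ipnorm ip (f - cscale (1/2) (ms j + ms k))"
  shows "\<forall>e>0. \<exists>M. \<forall>j\<ge>M. \<forall>k\<ge>M. ipnorm ip (ms j - ms k) < e"
proof (intro allI impI)
  fix e :: real assume e: "e > 0"
  define \<delta> where "\<delta> = min 1 (e\<^sup>2 / (8 * d + 4))"
  have "\<delta> > 0" using e d unfolding \<delta>_def by simp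
  then obtain M where M: "0 < M" "inverse (real M) < \<delta>"
    using ex_inverse_of_nat_less by blast
  have M_bound: "inverse (real (Suc n)) < \<delta>" if "n \<ge> M" for n
    using M that by (smt (verit) le_imp_inverse_le of_nat_0_less_iff of_nat_Suc of_nat_mono)
  have "ipnorm ip (ms j - ms k) < e" if "j \<ge> M" "k \<ge> M" for j k
  proof -
    define a where "a = inverse (real (Suc j))"
    define b where "b = inverse (real (Suc k))"
    have a: "0 \<le> a" "a < \<delta>" and b: "0 \<le> b" "b < \<delta>" using M_bound that unfolding a_def b_def by auto
    have sq: "(ipnorm ip (f - ms j))\<^sup>2 \<le> (d + a)\<^sup>2" "(ipnorm ip (f - ms k))\<^sup>2 \<le> (d + b)\<^sup>2"
      using ms[of j] ms[of k] by (auto intro!: power_mono simp: a_def b_def ipnorm_nonneg)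
    have "(ipnorm ip (ms j - ms k))\<^sup>2 \<le> 2 * (d + a)\<^sup>2 + 2 * (d + b)\<^sup>2 - 4 * d\<^sup>2"
      using midpoint_distance_bound[OF lower d, of j k] sq by linarith
    also have "\<dots> = (4 * d + 2 * a) * a + (4 * d + 2 * b) * b" by (simp add: power2_eq_square algebra_simps)
    also have "\<dots> \<le> (4 * d + 2) * a + (4 * d + 2) * b"
      using a b d unfolding \<delta>_def by (intro add_mono mult_right_mono) auto
    also have "\<dots> < (8 * d + 4) * (e\<^sup>2 / (8 * d + 4))"
    proof -
      have "a + b < 2 * (e\<^sup>2 / (8 * d + 4))" using a(2) b(2) unfolding \<delta>_def by linarith
      then have "(4 * d + 2) * (a + b) < (4 * d + 2) * (2 * (e\<^sup>2 / (8 * d + 4)))"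
        using d by (intro mult_strict_left_mono) auto
      then show ?thesis by (simp add: algebra_simps)
    qed
    also have "\<dots> = e\<^sup>2" using d by simp
    finally show ?thesis using e by (simp add: power2_less_imp_less)
  qed
  then show "\<exists>M. \<forall>j\<ge>M. \<forall>k\<ge>M. ipnorm ip (ms j - ms k) < e" by blast
qed

lemma closest_point_exists:
  assumes N: "csubspace_on N"
    and N_closed: "\<And>s m. (\<And>n. s n \<in> N) \<Longrightarrow> (\<lambda>n. ipnorm ip (s n - m)) \<longlonglongrightarrow> 0 \<Longrightarrow> m \<in> N"
  shows "\<exists>m0\<in>N. \<forall>m\<in>N. ipnorm ip (f - m0) \<le> ipnorm ip (f - m)"
proof -
  define d where "d = Inf ((\<lambda>m. ipnorm ip (f - m)) ` N)"
  have bdd: "bdd_below ((\<lambda>m. ipnorm ip (f - m)) ` N)"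
    by (rule bdd_belowI[of _ 0]) (auto simp: ipnorm_nonneg)
  have d_le: "d \<le> ipnorm ip (f - m)" if "m \<in> N" for m
    unfolding d_def using bdd that by (simp add: cInf_lower)
  have d_nonneg: "0 \<le> d"
    unfolding d_def using csubspace_zero[OF N] by (intro cInf_greatest) (auto simp: ipnorm_nonneg)
  have "\<exists>m\<in>N. ipnorm ip (f - m) < d + inverse (real (Suc n))" for n
  proof -
    have "d < d + inverse (real (Suc n))" by simp
    then show ?thesis
      using csubspace_zero[OF N] bdd unfolding d_def by (subst (asm) cInf_less_iff) auto
  qed
  then obtain ms where ms: "\<And>n. ms n \<in> N" "\<And>n. ipnorm ip (f - ms n) < d + inverse (real (Suc n))"
    by metis
  have "\<forall>e>0. \<exists>M. \<forall>j\<ge>M. \<forall>k\<ge>M. ipnorm ip (ms j - ms k) < e"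
    by (rule minimizing_sequence_Cauchy[OF d_nonneg ms(2)])
      (intro d_le csubspace_scale[OF N] csubspace_add[OF N] ms(1))
  then obtain m0 where m0: "(\<lambda>n. ipnorm ip (ms n - m0)) \<longlonglongrightarrow> 0"
    using complete unfolding complete_on_def by blast
  have "(\<lambda>n. d + inverse (real (Suc n)) + ipnorm ip (ms n - m0)) \<longlonglongrightarrow> d + 0 + 0"
    by (intro tendsto_add tendsto_const m0 LIMSEQ_inverse_real_of_nat)
  moreover have "ipnorm ip (f - m0) \<le> d + inverse (real (Suc n)) + ipnorm ip (ms n - m0)" for n
    using ms(2)[of n] ipnorm_triangle_diff[of f "ms n" m0] by simp
  ultimately have "ipnorm ip (f - m0) \<le> d"
    using LIMSEQ_le_const by fastforce
  then show ?thesis using N_closed[OF ms(1) m0] d_le by (meson order_trans)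
qed

lemma antilinear_kernel_orthogonal_vector:
  fixes l :: "'a \<Rightarrow> complex"
  assumes l_add: "\<And>x y. l (x + y) = l x + l y"
    and l_scale: "\<And>a x. l (cscale a x) = cnj a * l x"
    and l_bound: "\<And>x. cmod (l x) \<le> C * ipnorm ip x"
    and f1: "l f1 \<noteq> 0"
  shows "\<exists>e. l e \<noteq> 0 \<and> (\<forall>n. l n = 0 \<longrightarrow> ip e n = 0)"
proof -
  have l_diff: "l (x - y) = l x - l y" for x y
    using l_add[of x "-y"] l_scale[of "-1" y] by simp
  define N where "N = {m. l m = 0}"
  have N: "csubspace_on N"
    unfolding N_def csubspace_on_def using l_add l_scale[of 0 0] l_scale by auto
  have N_closed: "m \<in> N" if "\<And>n. s n \<in> N" "(\<lambda>n. ipnorm ip (s n - m)) \<longlonglongrightarrow> 0" for s m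
  proof -
    have "cmod (l m) \<le> C * ipnorm ip (s n - m)" for n
      using that(1) l_bound[of "s n - m"] unfolding N_def by (simp add: l_diff)
    then have "cmod (l m) \<le> C * 0"
      by (intro LIMSEQ_le_const[OF tendsto_mult[OF tendsto_const that(2)]]) auto
    then show ?thesis unfolding N_def by simp
  qed
  have "\<exists>m0\<in>N. \<forall>m\<in>N. ipnorm ip (f1 - m0) \<le> ipnorm ip (f1 - m)"
    by (rule closest_point_exists[OF N]) (rule N_closed)
  then obtain m0 where m0: "m0 \<in> N" "\<And>m. m \<in> N \<Longrightarrow> ipnorm ip (f1 - m0) \<le> ipnorm ip (f1 - m)"
    by blast
  have "ip (f1 - m0) n = 0" if "n \<in> N" for n
  proof (rule minimal_norm_orthogonal)
    show "ipnorm ip (f1 - m0) \<le> ipnorm ip ((f1 - m0) - cscale t n)" for t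
      using m0(2)[OF csubspace_add[OF N m0(1) csubspace_scale[OF N that]]]
      by (simp add: algebra_simps)
  qed auto
  moreover have "l (f1 - m0) \<noteq> 0" using f1 m0(1) unfolding N_def by (simp add: l_diff)
  ultimately show ?thesis unfolding N_def by blast
qed

lemma riesz_representation:
  fixes l :: "'a \<Rightarrow> complex"
  assumes l_add: "\<And>x y. l (x + y) = l x + l y"
    and l_scale: "\<And>a x. l (cscale a x) = cnj a * l x"
    and l_bound: "\<And>x. cmod (l x) \<le> C * ipnorm ip x"
  shows "\<exists>u. \<forall>f. l f = ip u f"
proof (cases "\<forall>f. l f = 0")
  case True
  then show ?thesis by (intro exI[of _ 0]) simp
next
  case False
  then obtain e where e: "l e \<noteq> 0" and orth: "\<And>n. l n = 0 \<Longrightarrow> ip e n = 0"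
    using antilinear_kernel_orthogonal_vector[OF assms] by blast
  have repr: "l f = (l e / ip e e) * ip e f" for f
  proof -
    define a where "a = cnj (l f / l e)"
    have "l (f - cscale a e) = 0"
      using l_add[of "f - cscale a e" "cscale a e"] e by (simp add: l_scale a_def)
    then have "ip e (f - cscale a e) = 0" by (rule orth)
    then have "ip e f = (l f / l e) * ip e e"
      by (simp add: ip_diff_right ip_scale_right a_def)
    moreover have "ip e e \<noteq> 0" using e ip_self_eq_zero l_scale[of 0 0] by force
    ultimately show ?thesis using e by simp
  qed
  show ?thesis
  proof (intro exI allI)
    show "l f = ip (cscale (l e / ip e e) e) f" for f
      using repr[of f] by (simp add: ip_scale_left)
  qed
qed

lemma ipnorm_Metric_space: "Metric_space UNIV (\<lambda>x y. ipnorm ip (x - y))"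
proof
  fix x y z :: 'a
  show "0 \<le> ipnorm ip (x - y)" by (simp add: ipnorm_nonneg)
  show "ipnorm ip (x - y) = ipnorm ip (y - x)" by (rule ipnorm_commute) auto
  show "ipnorm ip (x - y) = 0 \<longleftrightarrow> x = y" using ipnorm_eq_zero_iff[of "x - y"] by simp
  show "ipnorm ip (x - z) \<le> ipnorm ip (x - y) + ipnorm ip (y - z)" by (rule ipnorm_triangle_diff) auto
qed

lemma baire_category_cover:
  fixes S :: "nat \<Rightarrow> 'a set"
  assumes cover: "\<And>x. \<exists>n. x \<in> S n"
  shows "\<exists>n f0 r. r > 0 \<and> (\<forall>h. ipnorm ip (h - f0) < r \<longrightarrow> (\<forall>e>0. \<exists>a\<in>S n. ipnorm ip (h - a) < e))"
proof -
  interpret M: Metric_space "UNIV::'a set" "\<lambda>x y. ipnorm ip (x - y)" by (rule ipnorm_Metric_space)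
  have mcomplete: "M.mcomplete"
    unfolding M.mcomplete_def
  proof (intro allI impI)
    fix \<sigma> assume "M.MCauchy \<sigma>"
    then have "\<forall>e>0. \<exists>N. \<forall>m\<ge>N. \<forall>n\<ge>N. ipnorm ip (\<sigma> m - \<sigma> n) < e"
      unfolding M.MCauchy_def by simp
    then obtain l where "(\<lambda>n. ipnorm ip (\<sigma> n - l)) \<longlonglongrightarrow> 0"
      using complete[unfolded complete_on_def, rule_format, of \<sigma>] by auto
    then show "\<exists>x. limitin M.mtopology \<sigma> x sequentially"
      unfolding M.limit_metric_sequentially LIMSEQ_iff by (auto simp: ipnorm_nonneg)
  qed
  define G where "G = range (\<lambda>n. M.mtopology closure_of S n)"
  have "x \<in> \<Union>G" for x
  proof -
    obtain n where "x \<in> S n" using cover by blast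
    then show ?thesis using closure_of_subset[of "S n" M.mtopology] unfolding G_def by auto
  qed
  then have "\<Union>G = UNIV" by blast
  have "\<exists>T\<in>G. M.mtopology interior_of T \<noteq> {}"
  proof (rule ccontr)
    assume "\<not> ?thesis"
    then have "M.mtopology interior_of \<Union>G = {}"
      by (intro M.metric_Baire_category_alt mcomplete) (auto simp: G_def)
    then show False using \<open>\<Union>G = UNIV\<close> interior_of_topspace[of M.mtopology] by simp
  qed
  then obtain n where "M.mtopology interior_of (M.mtopology closure_of S n) \<noteq> {}"
    unfolding G_def by blast
  then obtain f0 r where r: "r > 0" "M.mball f0 r \<subseteq> M.mtopology closure_of S n"
    unfolding M.metric_interior_of by blast
  have "\<forall>e>0. \<exists>a\<in>S n. ipnorm ip (h - a) < e" if "ipnorm ip (h - f0) < r" for h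
    using that r(2) ipnorm_commute[of h f0] unfolding M.metric_closure_of by fastforce
  then show ?thesis using r(1) by blast
qed

lemma linear_map_bounded_near_zero:
  fixes B :: "'a \<Rightarrow> 'k::cvec"
  assumes K: "ipspace K ipK" and B_in: "\<And>x. B x \<in> K"
    and B_add: "\<And>x y. B (x + y) = B x + B y" and B_scale: "\<And>a x. B (cscale a x) = cscale a (B x)"
  shows "\<exists>R\<ge>0. \<exists>r>0. \<forall>h e. ipnorm ip h < r \<longrightarrow> e > 0 \<longrightarrow>
           (\<exists>a. ipnorm ip (h - a) < e \<and> ipnorm ipK (B a) \<le> R)"
proof -
  interpret K: ipspace K ipK by (rule K)
  have B_diff: "B (x - y) = B x - B y" for x y
    using B_add[of x "-y"] B_scale[of "-1" y] by simp
  define S where "S n = {a. ipnorm ipK (B a) \<le> real n}" for n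
  have cover: "\<exists>n. x \<in> S n" for x
    using real_nat_ceiling_ge unfolding S_def by blast
  obtain n f0 r where r: "r > 0"
    and dense: "\<And>h e. ipnorm ip (h - f0) < r \<Longrightarrow> e > 0 \<Longrightarrow> \<exists>a\<in>S n. ipnorm ip (h - a) < e"
    using baire_category_cover[OF cover] by blast
  \<comment> \<open>approximate \<open>f0 + h\<close> and \<open>f0\<close> from \<open>S n\<close> and subtract\<close>
  have "\<exists>a. ipnorm ip (h - a) < e \<and> ipnorm ipK (B a) \<le> 2 * real n"
    if h: "ipnorm ip h < r" and e: "e > 0" for h e
  proof -
    obtain a1 where a1: "a1 \<in> S n" "ipnorm ip ((f0 + h) - a1) < e / 2"
      using dense[of "f0 + h" "e / 2"] h e by auto
    obtain a2 where a2: "a2 \<in> S n" "ipnorm ip (f0 - a2) < e / 2"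
      using dense[of f0 "e / 2"] r e by auto
    have "h - (a1 - a2) = ((f0 + h) - a1) - (f0 - a2)" by (simp add: algebra_simps)
    then have "ipnorm ip (h - (a1 - a2)) \<le> ipnorm ip ((f0 + h) - a1) + ipnorm ip (f0 - a2)"
      by (metis UNIV_I ipnorm_diff_le)
    moreover have "ipnorm ipK (B (a1 - a2)) \<le> ipnorm ipK (B a1) + ipnorm ipK (B a2)"
      using K.ipnorm_triangle[OF B_in csubspace_uminus[OF K.subspace B_in], of a1 a2]
        K.ipnorm_minus[OF B_in, of a2]
      by (simp add: B_diff)
    ultimately show ?thesis using a1 a2 unfolding S_def by (intro exI[of _ "a1 - a2"]) auto
  qed
  then show ?thesis using r by (intro exI[of _ "2 * real n"]) auto
qed

lemma linear_map_approximately_bounded: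
  fixes B :: "'a \<Rightarrow> 'k::cvec"
  assumes K: "ipspace K ipK" and B_in: "\<And>x. B x \<in> K"
    and B_add: "\<And>x y. B (x + y) = B x + B y" and B_scale: "\<And>a x. B (cscale a x) = cscale a (B x)"
  shows "\<exists>M\<ge>0. \<forall>h. \<exists>a. ipnorm ip (h - a) \<le> ipnorm ip h / 2 \<and> ipnorm ipK (B a) \<le> M * ipnorm ip h"
proof -
  interpret K: ipspace K ipK by (rule K)
  obtain R r where R: "R \<ge> 0" "r > 0"
    and near_zero: "\<And>h e. ipnorm ip h < r \<Longrightarrow> e > 0 \<Longrightarrow> \<exists>a. ipnorm ip (h - a) < e \<and> ipnorm ipK (B a) \<le> R"
    using linear_map_bounded_near_zero[OF assms] by blast
  \<comment> \<open>rescale \<open>h\<close> to norm \<open>r/2\<close>, approximate it there, and scale back\<close>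
  have "\<exists>a. ipnorm ip (h - a) \<le> ipnorm ip h / 2 \<and> ipnorm ipK (B a) \<le> (2 * R / r) * ipnorm ip h" for h
  proof (cases "h = 0")
    case True
    then show ?thesis using B_scale[of 0 0] by (intro exI[of _ 0]) simp
  next
    case False
    define c where "c = ipnorm ip h"
    have c: "c > 0" using False ipnorm_eq_zero_iff[of h] ipnorm_nonneg[of h] unfolding c_def by simp
    define t where "t = r / (2 * c)"
    have t: "t > 0" unfolding t_def using R c by simp
    have "ipnorm ip (cscale (of_real t) h) = t * c"
      using t by (simp add: ipnorm_scale c_def)
    also have "\<dots> = r / 2" using c by (simp add: t_def)
    finally have "ipnorm ip (cscale (of_real t) h) = r / 2" .
    then obtain a' where a': "ipnorm ip (cscale (of_real t) h - a') < t * c / 2" "ipnorm ipK (B a') \<le> R"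
      using near_zero[of "cscale (of_real t) h" "t * c / 2"] R t c by auto
    define a where "a = cscale (of_real (1 / t)) a'"
    have "h - a = cscale (of_real (1 / t)) (cscale (of_real t) h - a')"
      unfolding a_def cscale_diff_right cscale_cscale using t by (simp add: cscale_one)
    then have "ipnorm ip (h - a) = ipnorm ip (cscale (of_real t) h - a') / t"
      using t by (simp add: ipnorm_scale norm_divide)
    also have "\<dots> \<le> ipnorm ip h / 2" using a'(1) t unfolding c_def by (simp add: field_simps)
    finally have "ipnorm ip (h - a) \<le> ipnorm ip h / 2" .
    moreover have "ipnorm ipK (B a) = ipnorm ipK (B a') / t"
      unfolding a_def B_scale using t by (simp add: K.ipnorm_scale[OF B_in] norm_divide)
    moreover have "R / t = (2 * R / r) * ipnorm ip h"
      using c R unfolding t_def c_def by (simp add: field_simps)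
    moreover have "ipnorm ipK (B a') / t \<le> R / t" using a'(2) t by (simp add: divide_right_mono)
    ultimately show ?thesis by (intro exI[of _ a]) simp
  qed
  then show ?thesis using R by (intro exI[of _ "2 * R / r"]) auto
qed

lemma successive_approximation_bound:
  fixes B :: "'a \<Rightarrow> 'k::cvec"
  assumes K: "ipspace K ipK" and K_complete: "complete_on K (ipnorm ipK)" and B_in: "\<And>x. B x \<in> K"
    and B_add: "\<And>x y. B (x + y) = B x + B y" and B_scale: "\<And>a x. B (cscale a x) = cscale a (B x)"
    and B_closed: "\<And>s f z. z \<in> K \<Longrightarrow> (\<lambda>n. ipnorm ip (s n - f)) \<longlonglongrightarrow> 0 \<Longrightarrow>
                     (\<lambda>n. ipnorm ipK (B (s n) - z)) \<longlonglongrightarrow> 0 \<Longrightarrow> B f = z"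
    and M: "M \<ge> 0" and A_half: "\<And>h. ipnorm ip (h - A h) \<le> ipnorm ip h / 2"
    and A_bound: "\<And>h. ipnorm ipK (B (A h)) \<le> M * ipnorm ip h"
  shows "ipnorm ipK (B f) \<le> 2 * M * ipnorm ip f"
proof -
  interpret K: ipspace K ipK by (rule K)
  have B_diff: "B (x - y) = B x - B y" for x y
    using B_add[of x "-y"] B_scale[of "-1" y] by simp
  define c where "c = ipnorm ip f"
  define hs where "hs = rec_nat f (\<lambda>_ x. x - A x)"
  have hs_0: "hs 0 = f" and hs_Suc: "hs (Suc k) = hs k - A (hs k)" for k
    by (simp_all add: hs_def)
  have hs_bound: "ipnorm ip (hs k) \<le> c * (1/2) ^ k" for k
  proof (induction k)
    case (Suc k)
    show ?case using A_half[of "hs k"] Suc.IH by (simp add: hs_Suc)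
  qed (simp add: hs_0 c_def)
  have step: "ipnorm ipK (B (hs m) - B (hs (Suc m))) \<le> (M * c) * (1/2) ^ m" for m
    using A_bound[of "hs m"] mult_left_mono[OF hs_bound M, of m]
    by (simp add: hs_Suc B_diff mult.assoc)
  obtain w where w: "w \<in> K" "(\<lambda>m. ipnorm ipK (B (hs m) - w)) \<longlonglongrightarrow> 0"
    using K_complete[unfolded complete_on_def, rule_format, of "\<lambda>m. B (hs m)"]
      K.geometric_increments_Cauchy[OF B_in step] B_in
    by blast
  have "(\<lambda>m. ipnorm ip (hs m - 0)) \<longlonglongrightarrow> 0"
  proof (rule LIMSEQ_by_bound)
    show "norm (ipnorm ip (hs m - 0) - 0) \<le> c * (1/2) ^ m" for m
      using hs_bound[of m] ipnorm_nonneg[of "hs m"] by simp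
    show "(\<lambda>m. (1/2::real) ^ m) \<longlonglongrightarrow> 0" by (rule LIMSEQ_realpow_zero) auto
  qed
  then have "w = 0" using B_closed[OF w(1) _ w(2)] B_scale[of 0 0] by simp
  then have "ipnorm ipK (B f) \<le> 2 * (M * c) + ipnorm ipK (B (hs j) - w)" for j
    using K.ipnorm_triangle_diff[OF B_in B_in K.subspace[THEN csubspace_zero], of f "hs j"]
      K.geometric_increments_bound[OF B_in step, of 0 j]
    by (simp add: hs_0)
  moreover have "(\<lambda>j. 2 * (M * c) + ipnorm ipK (B (hs j) - w)) \<longlonglongrightarrow> 2 * (M * c) + 0"
    by (intro tendsto_add tendsto_const w(2))
  ultimately have "ipnorm ipK (B f) \<le> 2 * (M * c) + 0" using LIMSEQ_le_const by blast
  then show ?thesis by (simp add: c_def)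
qed

lemma closed_graph_theorem:
  fixes B :: "'a \<Rightarrow> 'k::cvec"
  assumes K: "ipspace K ipK" and K_complete: "complete_on K (ipnorm ipK)" and B_in: "\<And>x. B x \<in> K"
    and B_add: "\<And>x y. B (x + y) = B x + B y" and B_scale: "\<And>a x. B (cscale a x) = cscale a (B x)"
    and B_closed: "\<And>s f z. z \<in> K \<Longrightarrow> (\<lambda>n. ipnorm ip (s n - f)) \<longlonglongrightarrow> 0 \<Longrightarrow>
                     (\<lambda>n. ipnorm ipK (B (s n) - z)) \<longlonglongrightarrow> 0 \<Longrightarrow> B f = z"
  shows "\<exists>C. \<forall>f. ipnorm ipK (B f) \<le> C * ipnorm ip f"
proof -
  obtain M A where M: "M \<ge> 0"
    and A: "\<And>h. ipnorm ip (h - A h) \<le> ipnorm ip h / 2" "\<And>h. ipnorm ipK (B (A h)) \<le> M * ipnorm ip h"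
    using linear_map_approximately_bounded[OF K B_in B_add B_scale] by metis
  have "ipnorm ipK (B f) \<le> 2 * M * ipnorm ip f" for f
    by (rule successive_approximation_bound[OF K K_complete B_in B_add B_scale B_closed M A])
  then show ?thesis by blast
qed

end

lemma ipnorm_le_graph_norm: "ipnorm ip u \<le> graph_norm ip T u"
  unfolding graph_norm_def by (simp add: real_le_rsqrt)

lemma ipnorm_op_le_graph_norm: "ipnorm ip (T u) \<le> graph_norm ip T u"
  unfolding graph_norm_def by (simp add: real_le_rsqrt)

lemma graph_norm_nonneg: "0 \<le> graph_norm ip T u"
  unfolding graph_norm_def by simp

context
  fixes ip :: "'a::cvec \<Rightarrow> 'a \<Rightarrow> complex" and D :: "'a set" and T :: "'a \<Rightarrow> 'a"
  assumes ip: "ipspace UNIV ip" and D_dense: "dense_wrt (ipnorm ip) D UNIV"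
begin

interpretation ipspace UNIV ip by (rule ip)

lemma adj_dom_adj_opI:
  assumes "\<forall>u\<in>D. ip (T u) v = ip u w"
  shows "v \<in> adj_dom ip D T \<and> adj_op ip D T v = w"
proof
  show "v \<in> adj_dom ip D T" using assms unfolding adj_dom_def by blast
  have "w' = w" if "\<forall>u\<in>D. ip (T u) v = ip u w'" for w'
    using orthogonal_to_dense_eq_zero[OF _ D_dense, of "w' - w"] that assms
    by (simp add: ip_diff_right)
  then show "adj_op ip D T v = w"
    unfolding adj_op_def using assms by (intro the_equality) blast+
qed

lemma adj_op_adjoint:
  assumes "v \<in> adj_dom ip D T" "u \<in> D"
  shows "ip (T u) v = ip u (adj_op ip D T v)"
proof -
  obtain w where w: "\<forall>u\<in>D. ip (T u) v = ip u w" using assms(1) unfolding adj_dom_def by blast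
  then show ?thesis using adj_dom_adj_opI[OF w] assms(2) by simp
qed

lemma adj_dom_subspace: "csubspace_on (adj_dom ip D T)"
  and adj_op_linear: "clinear_on (adj_dom ip D T) (adj_op ip D T)"
proof -
  have add: "v1 + v2 \<in> adj_dom ip D T \<and> adj_op ip D T (v1 + v2) = adj_op ip D T v1 + adj_op ip D T v2"
    if "v1 \<in> adj_dom ip D T" "v2 \<in> adj_dom ip D T" for v1 v2
    using that by (intro adj_dom_adj_opI) (simp add: adj_op_adjoint ip_add_right)
  have scale: "cscale a v \<in> adj_dom ip D T \<and> adj_op ip D T (cscale a v) = cscale a (adj_op ip D T v)"
    if "v \<in> adj_dom ip D T" for a v
    using that by (intro adj_dom_adj_opI) (simp add: adj_op_adjoint ip_scale_right)
  have "0 \<in> adj_dom ip D T" using adj_dom_adj_opI[of 0 0] by simp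
  then show "csubspace_on (adj_dom ip D T)"
    unfolding csubspace_on_def using add scale by blast
  show "clinear_on (adj_dom ip D T) (adj_op ip D T)"
    unfolding clinear_on_def using add scale by blast
qed

end

lemma antidual_add: "phi \<in> antidual K nK \<Longrightarrow> x \<in> K \<Longrightarrow> y \<in> K \<Longrightarrow> phi (x + y) = phi x + phi y"
  unfolding antidual_def by blast

lemma antidual_scale: "phi \<in> antidual K nK \<Longrightarrow> x \<in> K \<Longrightarrow> phi (cscale a x) = cnj a * phi x"
  unfolding antidual_def by blast

lemma antidual_outside: "phi \<in> antidual K nK \<Longrightarrow> x \<notin> K \<Longrightarrow> phi x = 0"
  unfolding antidual_def by blast

lemma antidual_zero: "csubspace_on K \<Longrightarrow> phi \<in> antidual K nK \<Longrightarrow> phi 0 = 0"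
  using antidual_add[of phi K nK 0 0] csubspace_zero[of K] by simp

lemma antidual_bounded: "phi \<in> antidual K nK \<Longrightarrow> \<exists>C. \<forall>x\<in>K. cmod (phi x) \<le> C * nK x"
  unfolding antidual_def by blast

section \<open>The boundary problem with an invertible reference operator\<close>

locale boundary_setting =
  fixes ip0 :: "'h::cvec \<Rightarrow> 'h \<Rightarrow> complex"
    and DT :: "'h set" and T :: "'h \<Rightarrow> 'h" and Ds :: "'h set" and Ts :: "'h \<Rightarrow> 'h"
    and H1 :: "'h set" and ipd :: "'k::cvec \<Rightarrow> 'k \<Rightarrow> complex" and K :: "'k set" and ipK
    and g0 g1 :: "'h \<Rightarrow> 'k" and G0 G1 :: "'h \<Rightarrow> 'k \<Rightarrow> complex" and DA :: "'h set" and A :: "'h \<Rightarrow> 'h"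
  assumes H0: "hspace ip0"
    and T_dense: "dense_wrt (ipnorm ip0) DT UNIV"
    and Ts_dom: "Ds = adj_dom ip0 DT T" and Ts_op: "\<forall>v\<in>Ds. Ts v = adj_op ip0 DT T v"
    and H1_sub: "H1 \<subseteq> Ds" and H1_dense_graph: "dense_wrt (graph_norm ip0 Ts) H1 Ds"
    and Kd: "ipspace UNIV ipd" and K: "ipspace K ipK" and K_complete: "complete_on K (ipnorm ipK)"
    and K_incl: "\<exists>C. \<forall>x\<in>K. ipnorm ipd x \<le> C * ipnorm ipK x"
    and K_dense: "dense_wrt (ipnorm ipd) K UNIV"
    and g0_range: "g0 ` H1 \<subseteq> K" and g1_lin: "clinear_on H1 g1" and g1_range: "g1 ` H1 \<subseteq> K"
    and g_surj: "\<forall>x\<in>K. \<forall>y\<in>K. \<exists>u\<in>H1. g0 u = x \<and> g1 u = y"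
    and DT_ker: "DT = {u\<in>H1. g0 u = 0 \<and> g1 u = 0}"
    and lagrange: "\<forall>u\<in>H1. \<forall>v\<in>H1.
        ip0 (Ts u) v - ip0 u (Ts v) = ipd (g1 u) (g0 v) - ipd (g0 u) (g1 v)"
    and G0_range: "\<forall>u\<in>Ds. G0 u \<in> antidual K (ipnorm ipK)"
    and G0_add: "\<forall>u\<in>Ds. \<forall>v\<in>Ds. G0 (u + v) = (\<lambda>x. G0 u x + G0 v x)"
    and G0_bdd: "\<exists>C. \<forall>u\<in>Ds. \<forall>x\<in>K. cmod (G0 u x) \<le> C * graph_norm ip0 Ts u * ipnorm ipK x"
    and G0_ext: "\<forall>u\<in>H1. G0 u = emb_dual K ipd (g0 u)"
    and G1_range: "\<forall>u\<in>Ds. G1 u \<in> antidual K (ipnorm ipK)"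
    and G1_add: "\<forall>u\<in>Ds. \<forall>v\<in>Ds. G1 (u + v) = (\<lambda>x. G1 u x + G1 v x)"
    and G1_bdd: "\<exists>C. \<forall>u\<in>Ds. \<forall>x\<in>K. cmod (G1 u x) \<le> C * graph_norm ip0 Ts u * ipnorm ipK x"
    and G1_ext: "\<forall>u\<in>H1. G1 u = emb_dual K ipd (g1 u)"
    and DA_subspace: "csubspace_on DA" and A_linear: "clinear_on DA A"
    and T_eq_A: "\<forall>u\<in>DT. A u = T u" and A_eq_Ts: "\<forall>u\<in>DA. A u = Ts u"
    and DA_ker: "DA = {u\<in>H1. g0 u = 0}"
    and A_bij: "bij_betw A DA UNIV"
    and A_inv_bdd: "\<exists>C. \<forall>u\<in>DA. ipnorm ip0 u \<le> C * ipnorm ip0 (A u)"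
begin

interpretation H: hspace ip0 by (rule H0)
interpretation Kd: ipspace UNIV ipd by (rule Kd)
interpretation K: ipspace K ipK by (rule K)

lemma Ds_subspace: "csubspace_on Ds"
  using adj_dom_subspace[OF H.ipspace_axioms T_dense] Ts_dom by simp

lemma Ts_diff:
  assumes "u \<in> Ds" "v \<in> Ds"
  shows "Ts (u - v) = Ts u - Ts v"
proof -
  have "clinear_on Ds (adj_op ip0 DT T)"
    using adj_op_linear[OF H.ipspace_axioms T_dense] Ts_dom by simp
  then show ?thesis
    using clinear_on_diff[OF Ds_subspace] assms Ts_op csubspace_diff[OF Ds_subspace] by simp
qed

lemma ker_TsI:
  assumes "\<forall>z\<in>DT. ip0 (T z) u = 0"
  shows "u \<in> Ds \<and> Ts u = 0"
  using adj_dom_adj_opI[OF H.ipspace_axioms T_dense, of T u 0] assms Ts_dom Ts_op by simp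

lemma G0_diff:
  assumes "u \<in> Ds" "v \<in> Ds"
  shows "G0 (u - v) x = G0 u x - G0 v x"
proof -
  have "G0 u = G0 ((u - v) + v)" by simp
  also have "\<dots> = (\<lambda>x. G0 (u - v) x + G0 v x)"
    using G0_add csubspace_diff[OF Ds_subspace assms] assms(2) by blast
  finally show ?thesis by simp
qed

lemma G1_diff:
  assumes "u \<in> Ds" "v \<in> Ds"
  shows "G1 (u - v) x = G1 u x - G1 v x"
proof -
  have "G1 u = G1 ((u - v) + v)" by simp
  also have "\<dots> = (\<lambda>x. G1 (u - v) x + G1 v x)"
    using G1_add csubspace_diff[OF Ds_subspace assms] assms(2) by blast
  finally show ?thesis by simp
qed

lemma lagrange_extended:
  assumes u: "u \<in> Ds" and v: "v \<in> H1"
  shows "ip0 (Ts u) v - ip0 u (Ts v) = G1 u (g0 v) - G0 u (g1 v)"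
proof -
  define f where "f w = ip0 (Ts w) v - ip0 w (Ts v) - (G1 w (g0 v) - G0 w (g1 v))" for w
  obtain C0 where C0: "\<And>w x. w \<in> Ds \<Longrightarrow> x \<in> K \<Longrightarrow> cmod (G0 w x) \<le> C0 * graph_norm ip0 Ts w * ipnorm ipK x"
    using G0_bdd by blast
  obtain C1 where C1: "\<And>w x. w \<in> Ds \<Longrightarrow> x \<in> K \<Longrightarrow> cmod (G1 w x) \<le> C1 * graph_norm ip0 Ts w * ipnorm ipK x"
    using G1_bdd by blast
  have gv: "g0 v \<in> K" "g1 v \<in> K" using v g0_range g1_range by auto
  define C where "C = ipnorm ip0 v + ipnorm ip0 (Ts v) + C1 * ipnorm ipK (g0 v) + C0 * ipnorm ipK (g1 v)"
  have f_bound: "cmod (f w) \<le> C * graph_norm ip0 Ts w" if w: "w \<in> Ds" for w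
  proof -
    have "cmod (f w) \<le> cmod (ip0 (Ts w) v) + cmod (ip0 w (Ts v)) + cmod (G1 w (g0 v)) + cmod (G0 w (g1 v))"
      unfolding f_def
      using norm_triangle_ineq4[of "ip0 (Ts w) v - ip0 w (Ts v)" "G1 w (g0 v) - G0 w (g1 v)"]
        norm_triangle_ineq4[of "ip0 (Ts w) v" "ip0 w (Ts v)"] norm_triangle_ineq4[of "G1 w (g0 v)" "G0 w (g1 v)"]
      by linarith
    also have "\<dots> \<le> graph_norm ip0 Ts w * ipnorm ip0 v + graph_norm ip0 Ts w * ipnorm ip0 (Ts v)
        + C1 * graph_norm ip0 Ts w * ipnorm ipK (g0 v) + C0 * graph_norm ip0 Ts w * ipnorm ipK (g1 v)"
    proof (intro add_mono C0 C1 w gv)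
      show "cmod (ip0 (Ts w) v) \<le> graph_norm ip0 Ts w * ipnorm ip0 v"
        using H.cauchy_schwarz ipnorm_op_le_graph_norm H.ipnorm_nonneg
        by (meson UNIV_I mult_right_mono order_trans)
      show "cmod (ip0 w (Ts v)) \<le> graph_norm ip0 Ts w * ipnorm ip0 (Ts v)"
        using H.cauchy_schwarz ipnorm_le_graph_norm H.ipnorm_nonneg
        by (meson UNIV_I mult_right_mono order_trans)
    qed
    also have "\<dots> = C * graph_norm ip0 Ts w" by (simp add: C_def algebra_simps)
    finally show ?thesis .
  qed
  have f_H1: "f s = 0" if "s \<in> H1" for s
    using lagrange that v G0_ext G1_ext gv by (simp add: f_def emb_dual_def)
  have f_diff: "f (w1 - w2) = f w1 - f w2" if "w1 \<in> Ds" "w2 \<in> Ds" for w1 w2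
    using that by (simp add: f_def Ts_diff G0_diff G1_diff H.ip_diff_left)
  have "f u = 0"
    by (rule functional_zero_by_density[OF Ds_subspace H1_sub H1_dense_graph _ _ _ _ u])
      (use f_diff f_H1 f_bound graph_norm_nonneg in auto)
  then show ?thesis by (simp add: f_def)
qed

abbreviation A_inv :: "'h \<Rightarrow> 'h" where "A_inv \<equiv> inv_into DA A"

lemma A_inv_in: "A_inv f \<in> DA"
  using A_bij by (auto simp: bij_betw_def inv_into_into)

lemma A_A_inv: "A (A_inv f) = f"
  using A_bij by (auto simp: bij_betw_def f_inv_into_f)

lemma A_inv_A: "v \<in> DA \<Longrightarrow> A_inv (A v) = v"
  using A_bij by (auto simp: bij_betw_def)

lemma Ts_A_inv: "Ts (A_inv f) = f"
  using A_eq_Ts A_inv_in A_A_inv by metis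

lemma DA_sub_H1: "DA \<subseteq> H1"
  using DA_ker by blast

lemma g0_A_inv: "g0 (A_inv f) = 0"
  using A_inv_in DA_ker by blast

lemma g1_A_inv_in: "g1 (A_inv f) \<in> K"
  using g1_range A_inv_in DA_sub_H1 by blast

lemma g1_A_inv_linear: "clinear_on UNIV (\<lambda>f. g1 (A_inv f))"
  using inv_into_clinear[OF DA_subspace A_linear A_bij] g1_lin A_inv_in DA_sub_H1
  unfolding clinear_on_def by (metis UNIV_I subsetD)

lemma g1_A_inv_diff: "g1 (A_inv (f - f')) = g1 (A_inv f) - g1 (A_inv f')"
  using clinear_on_diff[OF _ g1_A_inv_linear] by (simp add: csubspace_on_def)

lemma g1_A_inv_pairing:
  assumes w: "w \<in> H1"
  shows "ipd (g0 w) (g1 (A_inv f)) = ip0 w f - ip0 (Ts w) (A_inv f)"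
proof -
  have "A_inv f \<in> H1" using A_inv_in DA_sub_H1 by blast
  from lagrange[rule_format, OF w this]
  have "ip0 (Ts w) (A_inv f) - ip0 w f = - ipd (g0 w) (g1 (A_inv f))"
    by (simp add: Ts_A_inv g0_A_inv)
  then show ?thesis by (simp add: algebra_simps)
qed

lemma g1_A_inv_pairing_bounded:
  assumes y: "y \<in> K"
  shows "\<exists>C. \<forall>f. cmod (ipd y (g1 (A_inv f))) \<le> C * ipnorm ip0 f"
proof -
  obtain w where w: "w \<in> H1" "g0 w = y" using g_surj y by blast
  obtain CA where CA: "\<And>f. ipnorm ip0 (A_inv f) \<le> CA * ipnorm ip0 f"
    using A_inv_bdd A_inv_in A_A_inv by metis
  have "cmod (ipd y (g1 (A_inv f))) \<le> (ipnorm ip0 w + ipnorm ip0 (Ts w) * CA) * ipnorm ip0 f" for f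
  proof -
    have "cmod (ipd y (g1 (A_inv f))) \<le> cmod (ip0 w f) + cmod (ip0 (Ts w) (A_inv f))"
      using g1_A_inv_pairing[OF w(1)] w(2) by (metis norm_triangle_ineq4)
    also have "\<dots> \<le> ipnorm ip0 w * ipnorm ip0 f + ipnorm ip0 (Ts w) * (CA * ipnorm ip0 f)"
      using H.cauchy_schwarz[of w f] H.cauchy_schwarz[of "Ts w" "A_inv f"] CA[of f]
      by (meson UNIV_I add_mono H.ipnorm_nonneg mult_left_mono order_trans)
    finally show ?thesis by (simp add: algebra_simps)
  qed
  then show ?thesis by blast
qed

lemma g1_A_inv_closed:
  assumes z: "z \<in> K" and s: "(\<lambda>n. ipnorm ip0 (s n - f)) \<longlonglongrightarrow> 0"
    and Bs: "(\<lambda>n. ipnorm ipK (g1 (A_inv (s n)) - z)) \<longlonglongrightarrow> 0"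
  shows "g1 (A_inv f) = z"
proof -
  obtain Ci where Ci: "\<And>x. x \<in> K \<Longrightarrow> ipnorm ipd x \<le> Ci * ipnorm ipK x" using K_incl by blast
  have "ipd y (g1 (A_inv f) - z) = 0" if y: "y \<in> K" for y
  proof -
    obtain Cy where Cy: "\<And>f. cmod (ipd y (g1 (A_inv f))) \<le> Cy * ipnorm ip0 f"
      using g1_A_inv_pairing_bounded[OF y] by blast
    have "(\<lambda>n. ipd y (g1 (A_inv (s n)))) \<longlonglongrightarrow> ipd y (g1 (A_inv f))"
    proof (rule LIMSEQ_by_bound[OF _ s])
      show "cmod (ipd y (g1 (A_inv (s n))) - ipd y (g1 (A_inv f))) \<le> Cy * ipnorm ip0 (s n - f)" for n
        using Cy[of "s n - f"] by (simp add: g1_A_inv_diff Kd.ip_diff_right)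
    qed
    moreover have "(\<lambda>n. ipd y (g1 (A_inv (s n)))) \<longlonglongrightarrow> ipd y z"
    proof (rule LIMSEQ_by_bound[OF _ Bs])
      show "cmod (ipd y (g1 (A_inv (s n))) - ipd y z)
          \<le> (ipnorm ipd y * Ci) * ipnorm ipK (g1 (A_inv (s n)) - z)" for n
        using Kd.cauchy_schwarz[of y "g1 (A_inv (s n)) - z"] Ci[OF csubspace_diff[OF K.subspace g1_A_inv_in z]]
        by (simp add: Kd.ip_diff_right mult.assoc) (meson Kd.ipnorm_nonneg UNIV_I mult_left_mono order_trans)
    qed
    ultimately show ?thesis using LIMSEQ_unique by (simp add: Kd.ip_diff_right)
  qed
  then have "g1 (A_inv f) - z = 0"
    by (intro Kd.orthogonal_to_dense_eq_zero[OF _ K_dense]) auto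
  then show ?thesis by simp
qed

lemma g1_A_inv_bounded: "\<exists>C. \<forall>f. ipnorm ipK (g1 (A_inv f)) \<le> C * ipnorm ip0 f"
  using g1_A_inv_linear g1_A_inv_closed g1_A_inv_in
  by (intro H.closed_graph_theorem[OF K K_complete]) (auto simp: clinear_on_def)

lemma ker_Ts_representative:
  assumes phi: "phi \<in> antidual K (ipnorm ipK)"
  shows "\<exists>u\<in>Ds. Ts u = 0 \<and> (\<forall>v\<in>DA. ip0 u (A v) = phi (g1 v))"
proof -
  obtain Cp where Cp: "\<And>x. x \<in> K \<Longrightarrow> cmod (phi x) \<le> Cp * ipnorm ipK x"
    using antidual_bounded[OF phi] by blast
  obtain CB where CB: "\<And>f. ipnorm ipK (g1 (A_inv f)) \<le> CB * ipnorm ip0 f"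
    using g1_A_inv_bounded by blast
  have "cmod (phi (g1 (A_inv f))) \<le> (max Cp 0 * CB) * ipnorm ip0 f" for f
  proof -
    have "cmod (phi (g1 (A_inv f))) \<le> max Cp 0 * ipnorm ipK (g1 (A_inv f))"
      using Cp[OF g1_A_inv_in] K.ipnorm_nonneg[OF g1_A_inv_in]
      by (meson max.cobounded1 mult_right_mono order_trans)
    also have "\<dots> \<le> max Cp 0 * (CB * ipnorm ip0 f)" using CB by (intro mult_left_mono) auto
    finally show ?thesis by simp
  qed
  then obtain u where u: "\<And>f. phi (g1 (A_inv f)) = ip0 u f"
    using H.riesz_representation[of "\<lambda>f. phi (g1 (A_inv f))"] g1_A_inv_linear g1_A_inv_in
      antidual_add[OF phi] antidual_scale[OF phi]
    unfolding clinear_on_def by (metis UNIV_I)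
  have "ip0 (T z) u = 0" if "z \<in> DT" for z
  proof -
    have "z \<in> DA" "g1 z = 0" using that DT_ker DA_ker by auto
    then have "ip0 u (T z) = 0"
      using u[of "T z"] T_eq_A that A_inv_A antidual_zero[OF K.subspace phi] by metis
    then show ?thesis using H.ip_conj_sym[of u "T z"] by simp
  qed
  then have "u \<in> Ds \<and> Ts u = 0" by (intro ker_TsI) blast
  then show ?thesis using u A_inv_A by metis
qed

lemma G0_ker_surjective:
  assumes phi: "phi \<in> antidual K (ipnorm ipK)"
  shows "\<exists>u\<in>Ds. Ts u = 0 \<and> G0 u = phi"
proof -
  obtain u where u: "u \<in> Ds" "Ts u = 0" and repr: "\<And>v. v \<in> DA \<Longrightarrow> ip0 u (A v) = phi (g1 v)"
    using ker_Ts_representative[OF phi] by blast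
  have "G0 u y = phi y" for y
  proof (cases "y \<in> K")
    case True
    obtain v where v: "v \<in> H1" "g0 v = 0" "g1 v = y" using g_surj True csubspace_zero[OF K.subspace] by blast
    then have "v \<in> DA" using DA_ker by blast
    have "- ip0 u (A v) = G1 u 0 - G0 u y"
      using lagrange_extended[OF u(1) v(1)] u(2) v A_eq_Ts \<open>v \<in> DA\<close> by simp
    moreover have "G1 u 0 = 0" using antidual_zero[OF K.subspace] G1_range u(1) by blast
    ultimately show ?thesis using repr[OF \<open>v \<in> DA\<close>] v(3) by simp
  next
    case False
    then show ?thesis using antidual_outside phi G0_range u(1) by metis
  qed
  then show ?thesis using u by blast
qed

lemma boundary_map_surjective:
  assumes phi: "phi \<in> antidual K (ipnorm ipK)" and x: "x \<in> K"
  shows "\<exists>u\<in>Ds. G0 u = phi \<and> reduced_Gamma1 Ds Ts G0 G1 u = emb_dual K ipd x"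
proof -
  define w where "w = gamma_zero Ds Ts G0 phi"
  have phi_im: "phi \<in> G0 ` {u\<in>Ds. Ts u = 0}" using G0_ker_surjective[OF phi] by blast
  have w: "w \<in> Ds" "G0 w = phi"
    using inv_into_into[OF phi_im] f_inv_into_f[OF phi_im] unfolding w_def gamma_zero_def by auto
  obtain v where v: "v \<in> H1" "g0 v = 0" "g1 v = x" using g_surj x csubspace_zero[OF K.subspace] by blast
  have "v \<in> Ds" using v(1) H1_sub by blast
  have "G0 v = (\<lambda>_. 0)" using G0_ext v(1,2) by (auto simp: emb_dual_def)
  then have G0_wv: "G0 (w + v) = phi" using G0_add w \<open>v \<in> Ds\<close> by simp
  show ?thesis
  proof (intro bexI conjI)
    show "w + v \<in> Ds" using csubspace_add[OF Ds_subspace w(1) \<open>v \<in> Ds\<close>] .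
    show "G0 (w + v) = phi" by (rule G0_wv)
    show "reduced_Gamma1 Ds Ts G0 G1 (w + v) = emb_dual K ipd x"
      unfolding reduced_Gamma1_def weyl_zero_def G0_wv w_def[symmetric]
      using G1_add w(1) \<open>v \<in> Ds\<close> G1_ext v(1,3) by simp
  qed
qed

end

theorem lemma4p9:
  fixes ip0 :: "'h::cvec \<Rightarrow> 'h \<Rightarrow> complex"
    and DT :: "'h set" and T :: "'h \<Rightarrow> 'h"
    and Ds :: "'h set" and Ts :: "'h \<Rightarrow> 'h"
    and H1 :: "'h set" and ip1 :: "'h \<Rightarrow> 'h \<Rightarrow> complex"
    and ipd :: "'k::cvec \<Rightarrow> 'k \<Rightarrow> complex"
    and K :: "'k set" and ipK :: "'k \<Rightarrow> 'k \<Rightarrow> complex"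
    and g0 g1 :: "'h \<Rightarrow> 'k"
    and G0 G1 :: "'h \<Rightarrow> 'k \<Rightarrow> complex"
    and DA :: "'h set" and A :: "'h \<Rightarrow> 'h"
  assumes H0_hilbert: "hilbert_on UNIV ip0" and H0_sep: "separable_on UNIV (ipnorm ip0)"
    and T_subspace: "csubspace_on DT" and T_linear: "clinear_on DT T"
    and T_closed: "closed_op (ipnorm ip0) DT T"
    and T_dense: "dense_wrt (ipnorm ip0) DT UNIV"
    and T_symm: "symmetric_op ip0 DT T"
    and Ts_dom: "Ds = adj_dom ip0 DT T"
    and Ts_op: "\<forall>v\<in>Ds. Ts v = adj_op ip0 DT T v"
    and H1_hilbert: "hilbert_on H1 ip1"
    and H1_incl: "\<exists>C. \<forall>u\<in>H1. ipnorm ip0 u \<le> C * ipnorm ip1 u"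
    and H1_dense: "dense_wrt (ipnorm ip0) H1 UNIV"
    and Kd_hilbert: "hilbert_on UNIV ipd" and Kd_sep: "separable_on UNIV (ipnorm ipd)"
    and K_hilbert: "hilbert_on K ipK"
    and K_incl: "\<exists>C. \<forall>x\<in>K. ipnorm ipd x \<le> C * ipnorm ipK x"
    and K_dense: "dense_wrt (ipnorm ipd) K UNIV"
    and H1_sub: "H1 \<subseteq> Ds"
    and H1_dense_graph: "dense_wrt (graph_norm ip0 Ts) H1 Ds"
    and Ts_bdd: "\<exists>C. \<forall>u\<in>H1. ipnorm ip0 (Ts u) \<le> C * ipnorm ip1 u"
    and g0_lin: "clinear_on H1 g0" and g0_range: "g0 ` H1 \<subseteq> K"
    and g0_bdd: "\<exists>C. \<forall>u\<in>H1. ipnorm ipK (g0 u) \<le> C * ipnorm ip1 u"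
    and g1_lin: "clinear_on H1 g1" and g1_range: "g1 ` H1 \<subseteq> K"
    and g1_bdd: "\<exists>C. \<forall>u\<in>H1. ipnorm ipK (g1 u) \<le> C * ipnorm ip1 u"
    and g_surj: "\<forall>x\<in>K. \<forall>y\<in>K. \<exists>u\<in>H1. g0 u = x \<and> g1 u = y"
    and ker_dense: "dense_wrt (ipnorm ip0) {u\<in>H1. g0 u = 0 \<and> g1 u = 0} UNIV"
    and DT_ker: "DT = {u\<in>H1. g0 u = 0 \<and> g1 u = 0}"
    and lagrange: "\<forall>u\<in>H1. \<forall>v\<in>H1.
        ip0 (Ts u) v - ip0 u (Ts v) = ipd (g1 u) (g0 v) - ipd (g0 u) (g1 v)"
    and G0_range: "\<forall>u\<in>Ds. G0 u \<in> antidual K (ipnorm ipK)"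
    and G0_add: "\<forall>u\<in>Ds. \<forall>v\<in>Ds. G0 (u + v) = (\<lambda>x. G0 u x + G0 v x)"
    and G0_scale: "\<forall>a. \<forall>u\<in>Ds. G0 (cscale a u) = (\<lambda>x. a * G0 u x)"
    and G0_bdd: "\<exists>C. \<forall>u\<in>Ds. \<forall>x\<in>K. cmod (G0 u x) \<le> C * graph_norm ip0 Ts u * ipnorm ipK x"
    and G0_ext: "\<forall>u\<in>H1. G0 u = emb_dual K ipd (g0 u)"
    and G1_range: "\<forall>u\<in>Ds. G1 u \<in> antidual K (ipnorm ipK)"
    and G1_add: "\<forall>u\<in>Ds. \<forall>v\<in>Ds. G1 (u + v) = (\<lambda>x. G1 u x + G1 v x)"
    and G1_scale: "\<forall>a. \<forall>u\<in>Ds. G1 (cscale a u) = (\<lambda>x. a * G1 u x)"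
    and G1_bdd: "\<exists>C. \<forall>u\<in>Ds. \<forall>x\<in>K. cmod (G1 u x) \<le> C * graph_norm ip0 Ts u * ipnorm ipK x"
    and G1_ext: "\<forall>u\<in>H1. G1 u = emb_dual K ipd (g1 u)"
    and A_sa: "selfadjoint_op ip0 DA A"
    and T_sub_A: "DT \<subseteq> DA" "\<forall>u\<in>DT. A u = T u"
    and A_sub_Ts: "DA \<subseteq> Ds" "\<forall>u\<in>DA. A u = Ts u"
    and DA_ker: "DA = {u\<in>H1. g0 u = 0}"
    and A_bij: "bij_betw A DA UNIV"
    and A_inv_bdd: "\<exists>C. \<forall>u\<in>DA. ipnorm ip0 u \<le> C * ipnorm ip0 (A u)"
  shows "\<forall>phi\<in>antidual K (ipnorm ipK). \<forall>x\<in>K. \<exists>u\<in>Ds.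
           G0 u = phi \<and> reduced_Gamma1 Ds Ts G0 G1 u = emb_dual K ipd x"
proof -
  interpret boundary_setting ip0 DT T Ds Ts H1 ipd K ipK g0 g1 G0 G1 DA A
    by (unfold_locales; (fact assms)?;
        use H0_hilbert Kd_hilbert K_hilbert A_sa in \<open>simp add: hilbert_on_def selfadjoint_op_def\<close>)
  show ?thesis using boundary_map_surjective by blast
qed

end
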